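(* Let $X$ be a Hilbert space, $\widehat\beta:X\to[0,+\infty)$ convex and lower semicontinuous (hence continuous), $\beta=\partial\widehat\beta$, and for $u\in X$ let $\beta^0(u)$ be the element of $\beta(u)$ of minimal norm. Let $\Psi:[0,+\infty)\to[0,+\infty)$ be continuous. If $\|\beta^0(u)\|_X\le\Psi(\widehat\beta(u))$ for every $u\in X$, then $\|\zeta\|_X\le\Psi(\widehat\beta(u))$ for all $u\in X$ and all $\zeta\in\beta(u)$. *)

theory Defs
  imports "HOL-Analysis.Analysis"
begin

definition lsc :: "('a::topological_space \<Rightarrow> real) \<Rightarrow> bool" where
  "lsc f \<longleftrightarrow> (\<forall>c. closed {x. f x \<le> c})"

definition subdiff :: "('a::real_inner \<Rightarrow> real) \<Rightarrow> 'a \<Rightarrow> 'a set" where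
  "subdiff f u = {\<zeta>. \<forall>v. f v \<ge> f u + inner \<zeta> (v - u)}"

definition subdiff0 :: "('a::real_inner \<Rightarrow> real) \<Rightarrow> 'a \<Rightarrow> 'a" where
  "subdiff0 f u = (THE \<zeta>. \<zeta> \<in> subdiff f u \<and> (\<forall>\<eta>\<in>subdiff f u. norm \<zeta> \<le> norm \<eta>))"

end

theory Submission
  imports Defs
begin

text \<open>
  For small \<open>t > 0\<close> the proximal point of \<open>u + t\<zeta>\<close> with a tiny step
  is a point \<open>p\<close> within \<open>t\<^sup>2\<close> of \<open>u + t\<zeta>\<close> at which \<open>\<partial>\<beta>(p)\<close> is nonempty, so the
  minimal section \<open>\<eta> = \<beta>\<^sup>0(p)\<close> exists. Monotonicity of the subdifferential,
  \<open>\<langle>\<eta> - \<zeta>, p - u\<rangle> \<ge> 0\<close>, gives \<open>\<parallel>\<eta>\<parallel> \<ge> \<parallel>\<zeta>\<parallel> - 2t\<close>, while convexity along the segment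
  and the subgradient inequality give \<open>\<beta>(p) \<rightarrow> \<beta>(u)\<close>. Letting \<open>t \<rightarrow> 0\<close> in
  \<open>\<parallel>\<zeta>\<parallel> - 2t \<le> \<parallel>\<beta>\<^sup>0(p)\<parallel> \<le> \<Psi>(\<beta>(p))\<close> and using continuity of \<open>\<Psi>\<close> gives the claim.
  The proximal points stand in for the continuity of \<open>\<beta>\<close>, which would make
  \<open>\<partial>\<beta>(u + t\<zeta>)\<close> itself nonempty but needs a Baire category argument.
\<close>

lemma norm_midpoint_square:
  fixes a b :: "'a::real_inner"
  shows "(norm ((1/2) *\<^sub>R (a + b)))\<^sup>2 = ((norm a)\<^sup>2 + (norm b)\<^sup>2) / 2 - (norm (a - b))\<^sup>2 / 4"
  by (simp add: power2_norm_eq_inner inner_add_left inner_add_right inner_diff_left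
      inner_diff_right inner_commute field_simps)

lemma continuous_imp_lsc:
  assumes "continuous_on UNIV f"
  shows "lsc f"
  unfolding lsc_def using assms by (auto intro: closed_Collect_le continuous_on_const)

lemma lsc_add_continuous:
  fixes f h :: "'a::topological_space \<Rightarrow> real"
  assumes f: "lsc f" and h: "continuous_on UNIV h"
  shows "lsc (\<lambda>x. f x + h x)"
  unfolding lsc_def
proof (intro allI)
  fix c
  have "open (- {x. f x + h x \<le> c})"
  proof (subst open_subopen, intro ballI)
    fix y assume "y \<in> - {x. f x + h x \<le> c}"
    then have gap: "c < f y + h y" by simp
    define \<epsilon> where "\<epsilon> = (f y + h y - c) / 2"
    let ?U = "- {x. f x \<le> f y - \<epsilon>} \<inter> {x. h y - \<epsilon> < h x}"
    have "open ?U"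
      using f h unfolding lsc_def
      by (intro open_Int open_Compl open_Collect_less) (auto intro: continuous_on_const)
    moreover have "y \<in> ?U" using gap by (simp add: \<epsilon>_def)
    moreover have "?U \<subseteq> - {x. f x + h x \<le> c}" by (auto simp: \<epsilon>_def field_simps)
    ultimately show "\<exists>U. open U \<and> y \<in> U \<and> U \<subseteq> - {x. f x + h x \<le> c}" by blast
  qed
  then show "closed {x. f x + h x \<le> c}" by (simp add: closed_def)
qed

lemma lsc_tendsto_le:
  assumes f: "lsc f" and X: "X \<longlonglongrightarrow> y" and fX: "(\<lambda>n. f (X n)) \<longlonglongrightarrow> m"
  shows "f y \<le> m"
proof (rule field_le_epsilon)
  fix e :: real assume "0 < e"
  then have "\<forall>\<^sub>F n in sequentially. f (X n) < m + e"
    using order_tendstoD(2)[OF fX] by simp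
  then have "\<forall>\<^sub>F n in sequentially. X n \<in> {z. f z \<le> m + e}"
    by eventually_elim simp
  then have "y \<in> {z. f z \<le> m + e}"
    using f unfolding lsc_def by (intro Lim_in_closed_set[OF _ _ _ X]) auto
  then show "f y \<le> m + e" by simp
qed

lemma strongly_midconvex_attains_min:
  fixes g :: "'a::{real_normed_vector,complete_space} \<Rightarrow> real"
  assumes ne: "S \<noteq> {}" and closed: "closed S"
    and mid: "\<And>x y. x \<in> S \<Longrightarrow> y \<in> S \<Longrightarrow> (1/2) *\<^sub>R (x + y) \<in> S"
    and bdd: "bdd_below (g ` S)" and c: "c > 0"
    and strong: "\<And>x y. x \<in> S \<Longrightarrow> y \<in> S \<Longrightarrow>
      g ((1/2) *\<^sub>R (x + y)) \<le> (g x + g y) / 2 - c * (norm (x - y))\<^sup>2"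
    and lsc: "lsc g"
  shows "\<exists>x\<in>S. \<forall>y\<in>S. g x \<le> g y"
proof -
  define m where "m = Inf (g ` S)"
  have le: "m \<le> g x" if "x \<in> S" for x
    unfolding m_def using bdd that by (auto intro: cInf_lower)
  have "\<exists>x\<in>S. g x < m + inverse (real (Suc n))" for n
    using cInf_lessD[of "g ` S" "m + inverse (real (Suc n))"] ne by (auto simp: m_def)
  then obtain X where X: "\<And>n. X n \<in> S" "\<And>n. g (X n) < m + inverse (real (Suc n))"
    by metis
  have "Cauchy X"
  proof (rule metric_CauchyI)
    fix e :: real assume e: "e > 0"
    obtain M :: nat where M: "inverse (real (Suc M)) < c * e\<^sup>2"
      using reals_Archimedean[of "c * e\<^sup>2"] c e by auto
    have "dist (X i) (X j) < e" if "M \<le> i" "M \<le> j" for i j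
    proof -
      have "inverse (real (Suc i)) \<le> inverse (real (Suc M))"
        "inverse (real (Suc j)) \<le> inverse (real (Suc M))"
        using that by (simp_all add: le_imp_inverse_le)
      moreover have "m \<le> (g (X i) + g (X j)) / 2 - c * (norm (X i - X j))\<^sup>2"
        using le[OF mid[OF X(1) X(1)]] strong[OF X(1) X(1)] order_trans by blast
      ultimately have "c * (norm (X i - X j))\<^sup>2 < c * e\<^sup>2"
        using X(2)[of i] X(2)[of j] M by argo
      then have "(norm (X i - X j))\<^sup>2 < e\<^sup>2" using c by simp
      then show ?thesis using e by (simp add: dist_norm power_less_imp_less_base)
    qed
    then show "\<exists>M. \<forall>i\<ge>M. \<forall>j\<ge>M. dist (X i) (X j) < e" by blast
  qed
  then obtain y where y: "X \<longlonglongrightarrow> y" using Cauchy_convergent convergent_def by blast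
  have "y \<in> S" using closed_sequentially[OF closed] X(1) y by blast
  moreover have "(\<lambda>n. g (X n)) \<longlonglongrightarrow> m"
  proof (rule tendsto_sandwich[of "\<lambda>n. m" _ _ "\<lambda>n. m + inverse (real (Suc n))"])
    show "\<forall>\<^sub>F n in sequentially. m \<le> g (X n)" using le X by auto
    show "\<forall>\<^sub>F n in sequentially. g (X n) \<le> m + inverse (real (Suc n))"
      using X(2) less_imp_le by (intro always_eventually) blast
    show "(\<lambda>n. m + inverse (real (Suc n))) \<longlonglongrightarrow> m"
      by (rule LIMSEQ_inverse_real_of_nat_add)
  qed simp
  then have "g y \<le> m" using lsc_tendsto_le[OF lsc y] by blast
  ultimately show ?thesis using le by force
qed

lemma subdiff_closed: "closed (subdiff f u)"
proof -
  have "subdiff f u = (\<Inter>v. {\<zeta>. f u + inner \<zeta> (v - u) \<le> f v})"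
    by (auto simp: subdiff_def)
  moreover have "closed {\<zeta>. f u + inner \<zeta> (v - u) \<le> f v}" for v
    by (intro closed_Collect_le continuous_intros)
  ultimately show ?thesis by auto
qed

lemma subdiff_midpoint:
  assumes "a \<in> subdiff f u" "b \<in> subdiff f u"
  shows "(1/2) *\<^sub>R (a + b) \<in> subdiff f u"
proof -
  have "f v \<ge> f u + inner ((1/2) *\<^sub>R (a + b)) (v - u)" for v
  proof -
    have "f v \<ge> f u + inner a (v - u)" "f v \<ge> f u + inner b (v - u)"
      using assms unfolding subdiff_def by auto
    then show ?thesis by (simp add: inner_add_left) argo
  qed
  then show ?thesis unfolding subdiff_def by auto
qed

lemma subdiff_monotone:
  assumes "\<zeta> \<in> subdiff f u" "\<eta> \<in> subdiff f v"
  shows "inner (\<eta> - \<zeta>) (v - u) \<ge> 0"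
proof -
  have "f v \<ge> f u + inner \<zeta> (v - u)" "f u \<ge> f v + inner \<eta> (u - v)"
    using assms unfolding subdiff_def by auto
  then show ?thesis by (simp add: inner_diff_left inner_diff_right)
qed

lemma min_norm_unique:
  fixes S :: "'a::real_inner set"
  assumes mid: "\<And>x y. x \<in> S \<Longrightarrow> y \<in> S \<Longrightarrow> (1/2) *\<^sub>R (x + y) \<in> S"
    and x: "x \<in> S" "\<forall>y\<in>S. norm x \<le> norm y"
    and z: "z \<in> S" "\<forall>y\<in>S. norm z \<le> norm y"
  shows "z = x"
proof -
  have "norm z = norm x" using x z by (simp add: order_antisym)
  moreover have "norm x \<le> norm ((1/2) *\<^sub>R (z + x))" using x z mid by blast
  then have "(norm x)\<^sup>2 \<le> (norm ((1/2) *\<^sub>R (z + x)))\<^sup>2" by (simp add: power_mono)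
  ultimately have "(norm (z - x))\<^sup>2 \<le> 0" unfolding norm_midpoint_square by simp
  then show "z = x" by simp
qed

lemma subdiff0_in_subdiff:
  fixes f :: "'a::{real_inner,complete_space} \<Rightarrow> real"
  assumes "subdiff f u \<noteq> {}"
  shows "subdiff0 f u \<in> subdiff f u"
proof -
  let ?S = "subdiff f u"
  have "\<exists>x\<in>?S. \<forall>y\<in>?S. (norm x)\<^sup>2 \<le> (norm y)\<^sup>2"
  proof (rule strongly_midconvex_attains_min[where c = "1/4" and g = "\<lambda>\<eta>. (norm \<eta>)\<^sup>2"])
    show "bdd_below ((\<lambda>\<eta>. (norm \<eta>)\<^sup>2) ` ?S)" by (auto intro: bdd_belowI[of _ 0])
    show "lsc (\<lambda>\<eta>. (norm \<eta>)\<^sup>2)" by (intro continuous_imp_lsc continuous_intros)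
    show "(norm ((1/2) *\<^sub>R (x + y)))\<^sup>2 \<le> ((norm x)\<^sup>2 + (norm y)\<^sup>2) / 2 - 1/4 * (norm (x - y))\<^sup>2"
      for x y :: 'a
      unfolding norm_midpoint_square by simp
  qed (use assms subdiff_closed subdiff_midpoint in simp_all)
  then obtain x where x: "x \<in> ?S" "\<forall>y\<in>?S. norm x \<le> norm y"
    using power2_le_imp_le norm_ge_zero by metis
  have "subdiff0 f u = x"
    unfolding subdiff0_def
  proof (rule the_equality)
    show "x \<in> ?S \<and> (\<forall>y\<in>?S. norm x \<le> norm y)" using x by blast
    show "z = x" if "z \<in> ?S \<and> (\<forall>y\<in>?S. norm z \<le> norm y)" for z
      using min_norm_unique[of ?S x z] subdiff_midpoint x that by blast
  qed
  with x show ?thesis by simp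
qed

lemma le_of_le_add_small_multiple:
  fixes a b c :: real
  assumes le: "\<And>\<theta>. 0 < \<theta> \<Longrightarrow> \<theta> \<le> 1 \<Longrightarrow> a \<le> b + \<theta> * c" and c: "c \<ge> 0"
  shows "a \<le> b"
proof (rule field_le_epsilon)
  fix e :: real assume e: "0 < e"
  define \<theta> where "\<theta> = min 1 (e / (c + 1))"
  have "\<theta> * c \<le> e / (c + 1) * c"
    using c by (intro mult_right_mono) (auto simp: \<theta>_def)
  also have "\<dots> \<le> e" using e c by (simp add: field_simps)
  finally show "a \<le> b + e" using le[of \<theta>] e c by (simp add: \<theta>_def)
qed

lemma prox_minimizer_in_subdiff:
  fixes f :: "'a::real_inner \<Rightarrow> real"
  assumes conv: "convex_on UNIV f" and k: "k > 0"
    and min: "\<And>v. f p + k * (norm (p - x))\<^sup>2 \<le> f v + k * (norm (v - x))\<^sup>2"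
  shows "(2 * k) *\<^sub>R (x - p) \<in> subdiff f p"
  unfolding subdiff_def
proof (intro CollectI allI)
  fix v
  define d where "d = v - p"
  have "f p \<le> f v + 2 * k * inner (p - x) d + \<theta> * (k * (norm d)\<^sup>2)"
    if \<theta>: "0 < \<theta>" "\<theta> \<le> 1" for \<theta>
  proof -
    have "(1 - \<theta>) *\<^sub>R p + \<theta> *\<^sub>R v = p + \<theta> *\<^sub>R d" by (simp add: d_def algebra_simps)
    then have convex: "f (p + \<theta> *\<^sub>R d) \<le> (1 - \<theta>) * f p + \<theta> * f v"
      using convex_onD[OF conv, of \<theta> p v] \<theta> by simp
    have shift: "p + \<theta> *\<^sub>R d - x = (p - x) + \<theta> *\<^sub>R d" by simp
    have "(norm (p + \<theta> *\<^sub>R d - x))\<^sup>2 = (norm (p - x))\<^sup>2 + 2 * \<theta> * inner (p - x) d + \<theta>\<^sup>2 * (norm d)\<^sup>2"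
      unfolding shift power2_norm_eq_inner
      by (simp add: inner_add_left inner_add_right inner_commute power2_eq_square)
    then have "f p + k * (norm (p - x))\<^sup>2 \<le>
        (1 - \<theta>) * f p + \<theta> * f v + k * ((norm (p - x))\<^sup>2 + 2 * \<theta> * inner (p - x) d + \<theta>\<^sup>2 * (norm d)\<^sup>2)"
      using min[of "p + \<theta> *\<^sub>R d"] convex by simp
    then have "\<theta> * f p \<le> \<theta> * (f v + 2 * k * inner (p - x) d + \<theta> * (k * (norm d)\<^sup>2))"
      by (simp add: algebra_simps power2_eq_square)
    then show ?thesis using \<theta> by simp
  qed
  then have "f p \<le> f v + 2 * k * inner (p - x) d"
    by (rule le_of_le_add_small_multiple) (use k in auto)
  moreover have "inner ((2 * k) *\<^sub>R (x - p)) (v - p) = - (2 * k * inner (p - x) d)"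
    by (simp add: d_def inner_diff_left algebra_simps)
  ultimately show "f p + inner ((2 * k) *\<^sub>R (x - p)) (v - p) \<le> f v" by simp
qed

lemma prox_point_exists:
  fixes f :: "'a::{real_inner,complete_space} \<Rightarrow> real"
  assumes nonneg: "\<And>u. f u \<ge> 0" and conv: "convex_on UNIV f" and lsc: "lsc f"
    and k: "k > 0"
  shows "\<exists>p. \<forall>v. f p + k * (norm (p - x))\<^sup>2 \<le> f v + k * (norm (v - x))\<^sup>2"
proof -
  define g where "g v = f v + k * (norm (v - x))\<^sup>2" for v
  have "\<exists>p\<in>UNIV. \<forall>v\<in>UNIV. g p \<le> g v"
  proof (rule strongly_midconvex_attains_min[where c = "k/4"])
    show "bdd_below (g ` UNIV)"
      using nonneg k by (intro bdd_belowI[of _ 0]) (auto simp: g_def)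
    show "lsc g"
      unfolding g_def by (intro lsc_add_continuous lsc continuous_intros)
    show "g ((1/2) *\<^sub>R (a + b)) \<le> (g a + g b) / 2 - k/4 * (norm (a - b))\<^sup>2" for a b
    proof -
      have "(1 - 1/2) *\<^sub>R a + (1/2) *\<^sub>R b = (1/2) *\<^sub>R (a + b)"
        by (simp add: scaleR_add_right)
      then have "f ((1/2) *\<^sub>R (a + b)) \<le> (f a + f b) / 2"
        using convex_onD[OF conv, of "1/2" a b] by simp
      moreover have "(1/2) *\<^sub>R (a + b) - x = (1/2) *\<^sub>R ((a - x) + (b - x))"
        by (simp add: algebra_simps) (simp add: scaleR_add_left[symmetric])
      then have "(norm ((1/2) *\<^sub>R (a + b) - x))\<^sup>2 =
          ((norm (a - x))\<^sup>2 + (norm (b - x))\<^sup>2) / 2 - (norm (a - b))\<^sup>2 / 4"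
        using norm_midpoint_square[of "a - x" "b - x"] by simp
      then have "k * (norm ((1/2) *\<^sub>R (a + b) - x))\<^sup>2 =
          (k * (norm (a - x))\<^sup>2 + k * (norm (b - x))\<^sup>2) / 2 - k/4 * (norm (a - b))\<^sup>2"
        by (simp only:) (simp add: algebra_simps)
      ultimately show ?thesis unfolding g_def by argo
    qed
  qed (use k in auto)
  then show ?thesis unfolding g_def by blast
qed

lemma exists_subdiff_nonempty_near:
  fixes f :: "'a::{real_inner,complete_space} \<Rightarrow> real"
  assumes nonneg: "\<And>u. f u \<ge> 0" and conv: "convex_on UNIV f" and lsc: "lsc f"
    and \<epsilon>: "\<epsilon> > 0"
  shows "\<exists>p. subdiff f p \<noteq> {} \<and> f p \<le> f x \<and> norm (p - x) \<le> \<epsilon>"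
proof -
  define k where "k = (f x + 1) / \<epsilon>\<^sup>2"
  have k: "k > 0" using nonneg[of x] \<epsilon> by (simp add: k_def add_nonneg_pos)
  obtain p where p: "\<And>v. f p + k * (norm (p - x))\<^sup>2 \<le> f v + k * (norm (v - x))\<^sup>2"
    using prox_point_exists[OF nonneg conv lsc k] by blast
  have "(2 * k) *\<^sub>R (x - p) \<in> subdiff f p"
    using prox_minimizer_in_subdiff[OF conv k p] .
  moreover have fp: "f p + k * (norm (p - x))\<^sup>2 \<le> f x"
    using p[of x] by simp
  moreover have "0 \<le> k * (norm (p - x))\<^sup>2"
    using k by simp
  ultimately have "f p \<le> f x" "subdiff f p \<noteq> {}" by auto
  have "k * (norm (p - x))\<^sup>2 \<le> k * \<epsilon>\<^sup>2"
    using fp nonneg[of p] \<epsilon> by (simp add: k_def)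
  then have "(norm (p - x))\<^sup>2 \<le> \<epsilon>\<^sup>2"
    using k by simp
  then show ?thesis using \<open>f p \<le> f x\<close> \<open>subdiff f p \<noteq> {}\<close> \<epsilon>
    by (auto intro: power2_le_imp_le)
qed

lemma subdiff_norm_lower_bound_near:
  fixes \<zeta> \<eta> :: "'a::real_inner"
  assumes \<zeta>: "\<zeta> \<in> subdiff f u" and \<eta>: "\<eta> \<in> subdiff f p"
    and t: "t > 0" and near: "norm (p - (u + t *\<^sub>R \<zeta>)) \<le> t\<^sup>2"
  shows "norm \<zeta> - 2 * t \<le> norm \<eta>"
proof -
  define d where "d = p - (u + t *\<^sub>R \<zeta>)"
  define Z where "Z = norm \<zeta>"
  have pu: "p - u = t *\<^sub>R \<zeta> + d" by (simp add: d_def)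
  have "t * Z\<^sup>2 + inner \<zeta> d \<le> inner \<eta> (p - u)"
    using subdiff_monotone[OF \<zeta> \<eta>]
    by (simp add: pu inner_diff_left inner_add_right Z_def power2_norm_eq_inner algebra_simps)
  also have "\<dots> \<le> norm \<eta> * norm (p - u)" by (rule norm_cauchy_schwarz)
  also have "\<dots> \<le> norm \<eta> * (t * Z + t\<^sup>2)"
    using norm_triangle_ineq[of "t *\<^sub>R \<zeta>" d] near[folded d_def] t
    by (intro mult_left_mono) (auto simp: pu Z_def)
  finally have upper: "t * Z\<^sup>2 + inner \<zeta> d \<le> t * (norm \<eta> * (Z + t))"
    by (simp add: algebra_simps power2_eq_square)
  have "- inner \<zeta> d \<le> Z * t\<^sup>2"
    using norm_cauchy_schwarz[of \<zeta> "- d"] mult_left_mono[OF near[folded d_def], of Z]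
    by (simp add: Z_def)
  moreover have "t * ((Z - 2 * t) * (Z + t)) = t * Z\<^sup>2 - Z * t\<^sup>2 - 2 * t ^ 3"
    by (simp add: algebra_simps power2_eq_square power3_eq_cube)
  moreover have "0 < t ^ 3" using t by simp
  ultimately have "t * ((Z - 2 * t) * (Z + t)) \<le> t * (norm \<eta> * (Z + t))"
    using upper by linarith
  then have "(Z - 2 * t) * (Z + t) \<le> norm \<eta> * (Z + t)" using t by simp
  moreover have "Z + t > 0" using t by (simp add: Z_def add_nonneg_pos)
  ultimately show ?thesis unfolding Z_def by simp
qed

lemma subgradient_approx_near:
  fixes f :: "'a::{real_inner,complete_space} \<Rightarrow> real"
  assumes nonneg: "\<And>u. f u \<ge> 0" and conv: "convex_on UNIV f" and lsc: "lsc f"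
    and \<zeta>: "\<zeta> \<in> subdiff f u" and t: "0 < t" "t \<le> 1"
  shows "\<exists>p. \<bar>f p - f u\<bar> \<le> t * (\<bar>f (u + \<zeta>) - f u\<bar> + norm \<zeta>) \<and>
    norm \<zeta> - 2 * t \<le> norm (subdiff0 f p)"
proof -
  obtain p where ne: "subdiff f p \<noteq> {}" and fp: "f p \<le> f (u + t *\<^sub>R \<zeta>)"
    and near: "norm (p - (u + t *\<^sub>R \<zeta>)) \<le> t\<^sup>2"
    using exists_subdiff_nonempty_near[OF nonneg conv lsc, of "t\<^sup>2" "u + t *\<^sub>R \<zeta>"] t by auto
  have "(1 - t) *\<^sub>R u + t *\<^sub>R (u + \<zeta>) = u + t *\<^sub>R \<zeta>" by (simp add: algebra_simps)
  then have "f (u + t *\<^sub>R \<zeta>) \<le> (1 - t) * f u + t * f (u + \<zeta>)"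
    using convex_onD[OF conv, of t u "u + \<zeta>"] t by simp
  then have above: "f p - f u \<le> t * (f (u + \<zeta>) - f u)"
    using fp by (simp add: algebra_simps)
  have "inner \<zeta> (p - u) = t * (norm \<zeta>)\<^sup>2 + inner \<zeta> (p - (u + t *\<^sub>R \<zeta>))"
    by (simp add: inner_diff_right inner_add_right power2_norm_eq_inner)
  moreover have "\<bar>inner \<zeta> (p - (u + t *\<^sub>R \<zeta>))\<bar> \<le> norm \<zeta> * t\<^sup>2"
    using Cauchy_Schwarz_ineq2[of \<zeta> "p - (u + t *\<^sub>R \<zeta>)"] mult_left_mono[OF near norm_ge_zero[of \<zeta>]]
    by linarith
  moreover have "norm \<zeta> * t\<^sup>2 \<le> t * norm \<zeta>"
  proof -
    have "t * t \<le> t" using t by (simp add: mult_left_le_one_le)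
    then show ?thesis
      using mult_left_mono[of "t * t" t "norm \<zeta>"] by (simp add: power2_eq_square mult.commute)
  qed
  moreover have "f u + inner \<zeta> (p - u) \<le> f p" using \<zeta> by (simp add: subdiff_def)
  ultimately have below: "f u - f p \<le> t * norm \<zeta>"
    using t by (smt (verit) mult_nonneg_nonneg zero_le_power2 norm_ge_zero)
  have "\<bar>f p - f u\<bar> \<le> t * (\<bar>f (u + \<zeta>) - f u\<bar> + norm \<zeta>)"
    using above below t by (smt (verit) mult_left_mono norm_ge_zero abs_ge_self distrib_left)
  moreover have "norm \<zeta> - 2 * t \<le> norm (subdiff0 f p)"
    using subdiff_norm_lower_bound_near[OF \<zeta> subdiff0_in_subdiff[OF ne] t(1) near] .
  ultimately show ?thesis by blast
qed

lemma subdiff0_approximates_subgradient: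
  fixes f :: "'a::{real_inner,complete_space} \<Rightarrow> real"
  assumes nonneg: "\<And>u. f u \<ge> 0" and conv: "convex_on UNIV f" and lsc: "lsc f"
    and \<zeta>: "\<zeta> \<in> subdiff f u"
  obtains P where "(\<lambda>n. f (P n)) \<longlonglongrightarrow> f u"
    and "\<And>n. norm \<zeta> - 2 * inverse (real (Suc n)) \<le> norm (subdiff0 f (P n))"
proof -
  define C where "C = \<bar>f (u + \<zeta>) - f u\<bar> + norm \<zeta>"
  define t where "t n = inverse (real (Suc n))" for n
  have "\<exists>p. \<bar>f p - f u\<bar> \<le> t n * C \<and> norm \<zeta> - 2 * t n \<le> norm (subdiff0 f p)" for n
    unfolding C_def
    by (rule subgradient_approx_near[OF nonneg conv lsc \<zeta>]) (simp_all add: t_def inverse_le_1_iff)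
  then obtain P where P: "\<And>n. \<bar>f (P n) - f u\<bar> \<le> t n * C"
      "\<And>n. norm \<zeta> - 2 * t n \<le> norm (subdiff0 f (P n))"
    by metis
  have t: "t \<longlonglongrightarrow> 0" unfolding t_def by (rule LIMSEQ_inverse_real_of_nat)
  have "(\<lambda>n. f (P n)) \<longlonglongrightarrow> f u"
  proof (rule tendsto_sandwich[of "\<lambda>n. f u - t n * C" _ _ "\<lambda>n. f u + t n * C"])
    show "\<forall>\<^sub>F n in sequentially. f u - t n * C \<le> f (P n)"
      "\<forall>\<^sub>F n in sequentially. f (P n) \<le> f u + t n * C"
      using P(1) by (auto simp: abs_le_iff algebra_simps)
  qed (auto intro!: tendsto_eq_intros t)
  with P(2) show ?thesis using that unfolding t_def by blast
qed

theorem mainTheorem5: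
  fixes betah :: "'a::{real_inner, complete_space} \<Rightarrow> real"
    and \<Psi> :: "real \<Rightarrow> real"
  assumes nonneg: "\<And>u. betah u \<ge> 0"
    and conv: "convex_on UNIV betah"
    and lsc: "lsc betah"
    and Psi_nonneg: "\<And>t. t \<ge> 0 \<Longrightarrow> \<Psi> t \<ge> 0"
    and Psi_cont: "continuous_on {0..} \<Psi>"
    and bound: "\<And>u. norm (subdiff0 betah u) \<le> \<Psi> (betah u)"
  shows "\<forall>u. \<forall>\<zeta>\<in>subdiff betah u. norm \<zeta> \<le> \<Psi> (betah u)"
proof (intro allI ballI)
  fix u \<zeta> assume "\<zeta> \<in> subdiff betah u"
  then obtain P where P: "(\<lambda>n. betah (P n)) \<longlonglongrightarrow> betah u"
    and approx: "\<And>n. norm \<zeta> - 2 * inverse (real (Suc n)) \<le> norm (subdiff0 betah (P n))"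
    using subdiff0_approximates_subgradient[OF nonneg conv lsc] by metis
  have "(\<lambda>n. \<Psi> (betah (P n))) \<longlonglongrightarrow> \<Psi> (betah u)"
    using nonneg by (intro continuous_on_tendsto_compose[OF Psi_cont P]) auto
  moreover have "(\<lambda>n. norm \<zeta> - 2 * inverse (real (Suc n))) \<longlonglongrightarrow> norm \<zeta> - 2 * 0"
    by (intro tendsto_intros LIMSEQ_inverse_real_of_nat)
  moreover have "norm \<zeta> - 2 * inverse (real (Suc n)) \<le> \<Psi> (betah (P n))" for n
    using approx bound order_trans by blast
  ultimately show "norm \<zeta> \<le> \<Psi> (betah u)"
    by (intro tendsto_le[OF sequentially_bot]) (auto simp del: of_nat_Suc)
qed

end
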